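(* Let $P$ be the Borel probability measure on $\mathbb{R}$ with density $f(x)=(3/2)^m$ if $x\in J_m:=[1-\frac{1}{3^{m-1}},1-\frac{2}{3^m}]$ for some $m\in\mathbb{N}$, and $f(x)=0$ otherwise. Let $n\ge2$ and let $\alpha_n$ be an optimal set of $n$-means for $P$. Then: (i) $\alpha_n\cap J_1\neq\emptyset$ and $\alpha_n\cap[\frac23,1]\neq\emptyset$; (ii) $\alpha_n$ contains no point of the open interval $(\frac13,\frac23)$; (iii) the Voronoi region of any point of $\alpha_n\cap J_1$ contains no point of $[\frac23,1]$, and the Voronoi region of any point of $\alpha_n\cap[\frac23,1]$ contains no point of $J_1$.
   Context: $\mathbb{N}=\{1,2,\dots\}$; note $J_1=[0,\frac13]$ and $J_2=[\frac23,\frac79]$. An optimal set of $n$-means for $P$ is a set $\alpha\subset\mathbb{R}$ with $\mathrm{card}(\alpha)\le n$ attaining $\inf\{\int\min_{a\in\alpha}(x-a)^2\,dP(x):\mathrm{card}(\alpha)\le n\}$. For a finite $\alpha\subset\mathbb{R}$ and $a\in\alpha$, the Voronoi region of $a$ is $M(a|\alpha)=\{x\in\mathbb{R}:|x-a|=\min_{b\in\alpha}|x-b|\}$. *)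

theory Defs
  imports "HOL-Analysis.Analysis" "HOL-Probability.Probability"
begin

definition J :: "nat \<Rightarrow> real set" where
  "J m = {1 - 1 / 3 ^ (m - 1) .. 1 - 2 / 3 ^ m}"

text \<open>The density: (3/2)^m on J_m (m >= 1), 0 elsewhere (the J_m are pairwise disjoint).\<close>
definition dens :: "real \<Rightarrow> real" where
  "dens x = (if \<exists>m\<ge>1. x \<in> J m
             then (3/2) ^ (THE m. m \<ge> 1 \<and> x \<in> J m) else 0)"

definition P :: "real measure" where
  "P = density lborel (\<lambda>x. ennreal (dens x))"

definition cost :: "real set \<Rightarrow> ennreal" where
  "cost \<alpha> = (\<integral>\<^sup>+ x. ennreal (Min ((\<lambda>a. (x - a)\<^sup>2) ` \<alpha>)) \<partial>P)"

definition admissible :: "nat \<Rightarrow> real set \<Rightarrow> bool" where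
  "admissible n \<alpha> \<longleftrightarrow> finite \<alpha> \<and> \<alpha> \<noteq> {} \<and> card \<alpha> \<le> n"

definition optimal_n_means :: "nat \<Rightarrow> real set \<Rightarrow> bool" where
  "optimal_n_means n \<alpha> \<longleftrightarrow> admissible n \<alpha> \<and>
     cost \<alpha> = (INF \<beta>\<in>{\<beta>. admissible n \<beta>}. cost \<beta>)"

definition voronoi :: "real \<Rightarrow> real set \<Rightarrow> real set" where
  "voronoi a \<alpha> = {x. \<bar>x - a\<bar> = Min ((\<lambda>b. \<bar>x - b\<bar>) ` \<alpha>)}"

end

theory Submission
  imports Defs
begin

text \<open>Comparison with the two-point set {1/6, 5/6} bounds the optimal distortion by 29/1944,
  while a set without points in J 1 (resp. [2/3,1]) costs at least 1/54 (resp. 25/1296), unless it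
  has points left of 0 (resp. right of 1), which can be moved to 0 (resp. 1) with strict gain.
  Every point a of an optimal set satisfies the centroid condition: the first moment of P about a
  over its Voronoi region vanishes. A point a in the gap (1/3,2/3) must be the strictly nearest
  point for some x in J 1 and for some x in [2/3,1], since otherwise it could be replaced by 1/3
  or 2/3; then either its left neighbour in J 1 or its right neighbour in [2/3,1] violates the
  centroid condition. Finally, if the region of a point of J 1 meets [2/3,1], then that point is
  1/3 and no point lies in (1/3,1); hence 1 is a point whose region contains J 2, so its moment
  is negative. The other half of (iii) is symmetric, with 0 in place of 1.\<close>

subsection \<open>The density\<close>

lemma J_Suc: "J (Suc k) = {1 - 1/3^k .. 1 - 2/3^Suc k}"
  by (simp add: J_def)

lemma J_0 [simp]: "J 0 = {}"
  by (simp add: J_def)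

lemma J_1: "J 1 = {0..1/3}"
  by (simp add: J_def)

lemma J_2: "J 2 = {2/3..7/9}"
  by (simp add: J_def)

lemma J_subset_right:
  assumes "k \<le> m" "1 \<le> k"
  shows "J m \<subseteq> {1 - 1/3^(k - 1)..1}"
proof -
  have "m \<noteq> 0" using assms by linarith
  then obtain i where m: "m = Suc i" by (cases m) auto
  have "(3::real)^(k - 1) \<le> 3^i" using assms m by (intro power_increasing) auto
  hence "(1::real)/3^i \<le> 1/3^(k - 1)" by (simp add: divide_simps)
  thus ?thesis unfolding m J_Suc by auto
qed

lemma J_unique:
  assumes "x \<in> J m" "x \<in> J k"
  shows "m = k"
proof -
  have "False" if mk: "x \<in> J m" "x \<in> J k" "m < k" for m k
  proof -
    obtain i where i: "m = Suc i" using mk(1) by (cases m) auto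
    have "x \<le> 1 - 2/3^Suc i" "1 - 1/3^Suc i \<le> x"
      using mk J_subset_right[of "Suc (Suc i)" k] unfolding i J_Suc by auto
    thus False by (simp add: divide_simps)
  qed
  thus ?thesis using assms by (metis linorder_neqE_nat)
qed

lemma dens_J: "x \<in> J m \<Longrightarrow> dens x = (3/2)^m"
proof -
  assume x: "x \<in> J m"
  hence "m \<ge> 1" by (cases m) auto
  moreover have "(THE m. m \<ge> 1 \<and> x \<in> J m) = m"
    using x \<open>m \<ge> 1\<close> J_unique by blast
  ultimately show ?thesis using x by (auto simp: dens_def)
qed

lemma dens_outside: "(\<And>m. x \<notin> J m) \<Longrightarrow> dens x = 0"
  by (auto simp: dens_def)

lemma dens_nonneg: "0 \<le> dens x"
  by (auto simp: dens_def)

lemma dens_J1: "x \<in> {0..1/3} \<Longrightarrow> dens x = 3/2"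
  using dens_J[of x 1] unfolding J_1 by simp

lemma dens_J2: "x \<in> {2/3..7/9} \<Longrightarrow> dens x = 9/4"
  using dens_J[of x 2] unfolding J_2 by (simp add: power2_eq_square)

lemma suminf_indicator_J:
  fixes c :: "nat \<Rightarrow> 'a::{t2_space, semiring_1}"
  assumes "x \<in> J m"
  shows "(\<Sum>k. c k * indicator (J k) x) = c m"
proof -
  have "(\<Sum>k. c k * indicator (J k) x) = (\<Sum>k\<in>{m}. c k * indicator (J k) x)"
    by (rule suminf_finite) (use assms J_unique in \<open>auto simp: indicator_def\<close>)
  thus ?thesis using assms by simp
qed

lemma dens_eq_suminf: "dens x = (\<Sum>m. (3/2)^m * indicator (J m) x)"
proof (cases "\<exists>m. x \<in> J m")
  case True
  then obtain m where "x \<in> J m" by blast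
  thus ?thesis by (simp add: suminf_indicator_J dens_J)
qed (simp add: dens_outside)

lemma ennreal_dens_eq_suminf: "ennreal (dens x) = (\<Sum>m. ennreal ((3/2)^m) * indicator (J m) x)"
proof (cases "\<exists>m. x \<in> J m")
  case True
  then obtain m where "x \<in> J m" by blast
  thus ?thesis by (simp add: suminf_indicator_J dens_J)
qed (simp add: dens_outside)

lemma borel_measurable_dens [measurable]: "dens \<in> borel_measurable borel"
  unfolding dens_eq_suminf[abs_def] by (intro borel_measurable_suminf) (auto simp: J_def)

abbreviation blocks :: "real set" where
  "blocks \<equiv> {0..1/3} \<union> {2/3..1}"

lemma dens_support: "dens x \<noteq> 0 \<Longrightarrow> x \<in> blocks"
proof -
  assume "dens x \<noteq> 0"
  then obtain m where m: "x \<in> J m" using dens_outside by blast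
  show ?thesis
  proof (cases "m \<ge> 2")
    case True thus ?thesis using m J_subset_right[of 2 m] by auto
  next
    case False
    hence "m = 1" using m by (cases m) auto
    thus ?thesis using m J_1 by auto
  qed
qed

lemma dens_gaps: "x \<in> {1/3<..<2/3} \<union> {7/9<..<8/9} \<Longrightarrow> dens x = 0"
proof (rule dens_outside)
  fix m :: nat
  assume x: "x \<in> {1/3<..<2/3} \<union> {7/9<..<8/9}"
  consider "m = 0" | "m = 1" | "m = 2" | "m \<ge> 3" by linarith
  thus "x \<notin> J m" using x J_1 J_2 J_subset_right[of 3 m] by cases auto
qed

subsection \<open>Integrals against the density\<close>

lemma nn_integral_P:
  "f \<in> borel_measurable borel \<Longrightarrow> (\<integral>\<^sup>+x. f x \<partial>P) = (\<integral>\<^sup>+x. ennreal (dens x) * f x \<partial>lborel)"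
  unfolding P_def by (subst nn_integral_density) auto

lemma nn_integral_dens_eq_suminf:
  assumes [measurable]: "h \<in> borel_measurable borel"
  shows "(\<integral>\<^sup>+x. ennreal (dens x) * h x \<partial>lborel)
           = (\<Sum>m. ennreal ((3/2)^m) * (\<integral>\<^sup>+x. h x * indicator (J m) x \<partial>lborel))"
proof -
  have "(\<integral>\<^sup>+x. ennreal (dens x) * h x \<partial>lborel)
          = (\<integral>\<^sup>+x. (\<Sum>m. ennreal ((3/2)^m) * (h x * indicator (J m) x)) \<partial>lborel)"
    by (subst ennreal_dens_eq_suminf) (simp add: ac_simps)
  also have "\<dots> = (\<Sum>m. (\<integral>\<^sup>+x. ennreal ((3/2)^m) * (h x * indicator (J m) x) \<partial>lborel))"
    by (rule nn_integral_suminf) (auto simp: J_def)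
  also have "\<dots> = (\<Sum>m. ennreal ((3/2)^m) * (\<integral>\<^sup>+x. h x * indicator (J m) x \<partial>lborel))"
    by (subst nn_integral_cmult) (auto simp: J_def)
  finally show ?thesis .
qed

lemma integral_dens_mult_eq_suminf:
  assumes [measurable]: "g \<in> borel_measurable borel" and "\<And>x. 0 \<le> g x"
  shows "(\<integral>x. dens x * g x \<partial>lborel)
           = enn2real (\<Sum>m. ennreal ((3/2)^m) * (\<integral>\<^sup>+x. ennreal (g x) * indicator (J m) x \<partial>lborel))"
proof -
  have "(\<integral>x. dens x * g x \<partial>lborel) = enn2real (\<integral>\<^sup>+x. ennreal (dens x * g x) \<partial>lborel)"
    using assms dens_nonneg by (intro integral_eq_nn_integral) auto
  also have "(\<integral>\<^sup>+x. ennreal (dens x * g x) \<partial>lborel) = (\<integral>\<^sup>+x. ennreal (dens x) * ennreal (g x) \<partial>lborel)"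
    using assms dens_nonneg by (intro nn_integral_cong) (simp add: ennreal_mult)
  finally show ?thesis by (simp add: nn_integral_dens_eq_suminf)
qed

lemma nn_integral_indicator_Icc_FTC:
  fixes f F :: "real \<Rightarrow> real"
  assumes "a \<le> b" "\<And>x. x \<in> {a..b} \<Longrightarrow> (F has_real_derivative f x) (at x)"
    "\<And>x. x \<in> {a..b} \<Longrightarrow> 0 \<le> f x"
  shows "(\<integral>\<^sup>+x. ennreal (f x) * indicator {a..b} x \<partial>lborel) = ennreal (F b - F a)"
proof (rule nn_integral_has_integral_lebesgue')
  show "(f has_integral F b - F a) {a..b}"
    by (rule fundamental_theorem_of_calculus[OF assms(1)])
       (use assms(2) in \<open>auto simp: has_real_derivative_iff_has_vector_derivative
                                intro: has_vector_derivative_at_within\<close>)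
qed (use assms in auto)

lemma dens_mass_J:
  "ennreal ((3/2)^m) * (\<integral>\<^sup>+x. indicator (J m) x \<partial>lborel) = ennreal (if m = 0 then 0 else (1/2)^m)"
proof (cases m)
  case (Suc k)
  have le: "1 - 1/3^k \<le> (1 - 2/3^Suc k :: real)"
    by (simp add: field_simps)
  have "(\<integral>\<^sup>+x. indicator (J m) x \<partial>lborel) = ennreal ((1 - 2/3^Suc k) - (1 - 1/3^k))"
    unfolding Suc J_Suc using le by simp
  moreover have "(3/2)^Suc k * ((1 - 2/3^Suc k) - (1 - 1/3^k)) = ((1/2)^Suc k :: real)"
    by (simp add: field_simps power_divide)
  ultimately show ?thesis using Suc le by (simp add: ennreal_mult[symmetric])
qed simp

lemma dens_moment_J:
  "ennreal ((3/2)^m) * (\<integral>\<^sup>+x. ennreal x * indicator (J m) x \<partial>lborel)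
     = ennreal (if m = 0 then 0 else (1/2)^m - 5/2 * (1/6)^m)"
proof (cases m)
  case (Suc k)
  have low: "0 \<le> 1 - 1/(3::real)^k" and le: "1 - 1/3^k \<le> (1 - 2/3^Suc k :: real)"
    by (simp_all add: field_simps)
  define L :: real where "L = (1 - 2/3^Suc k)^2/2 - (1 - 1/3^k)^2/2"
  have int: "(\<integral>\<^sup>+x. ennreal x * indicator (J m) x \<partial>lborel) = ennreal L"
    unfolding Suc J_Suc L_def
    by (rule nn_integral_indicator_Icc_FTC[OF le, where F="\<lambda>x. x^2/2"])
       (use low in \<open>auto intro!: derivative_eq_intros order_trans[OF low]\<close>)
  have "0 \<le> L"
    using power_mono[OF le low, of 2] by (simp add: L_def)
  hence "ennreal ((3/2)^m) * (\<integral>\<^sup>+x. ennreal x * indicator (J m) x \<partial>lborel) = ennreal ((3/2)^m * L)"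
    unfolding int by (simp add: ennreal_mult)
  also have "(3/2)^m * L = (1/2)^m - 5/2 * (1/6)^m"
    unfolding Suc L_def by (simp add: field_simps power_divide power2_eq_square power_mult_distrib[symmetric])
  finally show ?thesis using Suc by simp
qed simp

lemma sums_geometric_from:
  fixes r :: real
  assumes "\<bar>r\<bar> < 1"
  shows "(\<lambda>m. if k \<le> m then r^m else 0) sums (r^k / (1 - r))"
proof -
  define f where "f m = (if k \<le> m then r^m else 0)" for m
  have "(\<lambda>i. r^k * r^i) sums (r^k * (1 / (1 - r)))"
    using assms by (intro sums_mult geometric_sums) simp
  moreover have "(\<lambda>i. f (i + k)) = (\<lambda>i. r^k * r^i)"
    by (simp add: f_def power_add mult.commute)
  ultimately have "(\<lambda>i. f (i + k)) sums (r^k / (1 - r))"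
    by simp
  hence "f sums (r^k / (1 - r) + (\<Sum>i<k. f i))"
    by (rule sums_iff_shift[THEN iffD1])
  thus ?thesis by (simp add: f_def[abs_def])
qed

lemma ennreal_suminf_sums: "(\<And>m. 0 \<le> f m) \<Longrightarrow> f sums s \<Longrightarrow> (\<Sum>m. ennreal (f m)) = ennreal s"
  by (subst suminf_ennreal2) (auto simp: sums_iff)

lemma nn_integral_dens: "(\<integral>\<^sup>+x. ennreal (dens x) \<partial>lborel) = 1"
proof -
  have "(\<integral>\<^sup>+x. ennreal (dens x) \<partial>lborel)
          = (\<Sum>m. ennreal ((3/2)^m) * (\<integral>\<^sup>+x. indicator (J m) x \<partial>lborel))"
    using nn_integral_dens_eq_suminf[of "\<lambda>_. 1"] by simp
  also have "\<dots> = (\<Sum>m. ennreal (if 1 \<le> m then (1/2)^m else 0))"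
    by (intro suminf_cong) (simp add: dens_mass_J)
  also have "\<dots> = ennreal ((1/2)^1 / (1 - 1/2))"
    by (rule ennreal_suminf_sums[OF _ sums_geometric_from]) auto
  finally show ?thesis by simp
qed

lemma integrable_dens: "integrable lborel dens"
  by (rule integrableI_nonneg) (auto simp: dens_nonneg nn_integral_dens)

abbreviation tail :: "real set" where
  "tail \<equiv> {8/9..1}"

lemma nn_integral_tail_J:
  "(\<integral>\<^sup>+x. ennreal (g x * indicator tail x) * indicator (J m) x \<partial>lborel)
     = (if 3 \<le> m then (\<integral>\<^sup>+x. ennreal (g x) * indicator (J m) x \<partial>lborel) else 0)"
proof (cases "3 \<le> m")
  case True
  thus ?thesis using J_subset_right[of 3 m]
    by (auto intro!: nn_integral_cong simp: indicator_def)
next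
  case False
  hence "m = 0 \<or> m = 1 \<or> m = 2" by auto
  hence "J m \<inter> tail = {}" using J_1 J_2 by auto
  hence "ennreal (g x * indicator tail x) * indicator (J m) x = 0" for x
    by (cases "x \<in> J m") (auto simp: indicator_def)
  thus ?thesis using False by (simp del: mult_eq_0_iff)
qed

lemma integral_dens_tail: "(\<integral>x. dens x * indicator tail x \<partial>lborel) = 1/4"
proof -
  have "(\<integral>x. dens x * indicator tail x \<partial>lborel)
          = enn2real (\<Sum>m. ennreal ((3/2)^m) * (\<integral>\<^sup>+x. ennreal (1 * indicator tail x) * indicator (J m) x \<partial>lborel))"
    by (subst integral_dens_mult_eq_suminf) auto
  also have "(\<Sum>m. ennreal ((3/2)^m) * (\<integral>\<^sup>+x. ennreal (1 * indicator tail x) * indicator (J m) x \<partial>lborel))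
               = (\<Sum>m. ennreal (if 3 \<le> m then (1/2)^m else 0))"
    unfolding nn_integral_tail_J by (intro suminf_cong) (simp add: dens_mass_J)
  also have "\<dots> = ennreal ((1/2)^3 / (1 - 1/2))"
    by (rule ennreal_suminf_sums[OF _ sums_geometric_from]) auto
  finally show ?thesis by (simp add: power3_eq_cube)
qed

lemma J_moment_nonneg: "1 \<le> m \<Longrightarrow> 5/2 * (1/6::real)^m \<le> (1/2)^m"
proof -
  assume "1 \<le> m"
  hence "(3::real) \<le> 3^m" using power_increasing[of 1 m "3::real"] by simp
  hence "5/2 * (1/6::real)^m \<le> 3^m * (1/6)^m" by (intro mult_right_mono) auto
  also have "\<dots> = (1/2)^m" by (simp add: power_mult_distrib[symmetric])
  finally show ?thesis .
qed

lemma integral_dens_tail_moment: "(\<integral>x. dens x * (x * indicator tail x) \<partial>lborel) = 17/72"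
proof -
  define f where "f m = (if 3 \<le> m then (1/2::real)^m - 5/2 * (1/6)^m else 0)" for m :: nat
  have "(\<integral>x. dens x * (x * indicator tail x) \<partial>lborel)
          = enn2real (\<Sum>m. ennreal ((3/2)^m) * (\<integral>\<^sup>+x. ennreal (x * indicator tail x) * indicator (J m) x \<partial>lborel))"
    by (subst integral_dens_mult_eq_suminf) (auto simp: indicator_def)
  also have "(\<Sum>m. ennreal ((3/2)^m) * (\<integral>\<^sup>+x. ennreal (x * indicator tail x) * indicator (J m) x \<partial>lborel))
               = (\<Sum>m. ennreal (f m))"
    unfolding nn_integral_tail_J by (intro suminf_cong) (simp add: dens_moment_J f_def)
  also have "\<dots> = ennreal ((1/2)^3 / (1 - 1/2) - 5/2 * ((1/6)^3 / (1 - 1/6)))"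
  proof (rule ennreal_suminf_sums)
    show "0 \<le> f m" for m using J_moment_nonneg[of m] by (simp add: f_def)
    have "(\<lambda>m. (if 3 \<le> m then (1/2::real)^m else 0) - 5/2 * (if 3 \<le> m then (1/6)^m else 0))
            sums ((1/2)^3 / (1 - 1/2) - 5/2 * ((1/6)^3 / (1 - 1/6)))"
      by (intro sums_diff sums_mult sums_geometric_from) auto
    thus "f sums ((1/2)^3 / (1 - 1/2) - 5/2 * ((1/6)^3 / (1 - 1/6)))"
      by (simp add: f_def[abs_def] if_distrib cong: if_cong)
  qed
  finally show ?thesis by (simp add: power3_eq_cube)
qed

lemma integrable_dens_mult:
  assumes [measurable]: "f \<in> borel_measurable borel" and bound: "\<And>x. x \<in> {0..1} \<Longrightarrow> \<bar>f x\<bar> \<le> C"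
  shows "integrable lborel (\<lambda>x. dens x * f x)"
proof (rule Bochner_Integration.integrable_bound[where f="\<lambda>x. C * dens x"])
  show "integrable lborel (\<lambda>x. C * dens x)" using integrable_dens by simp
  have "\<bar>dens x * f x\<bar> \<le> \<bar>C * dens x\<bar>" for x
  proof (cases "dens x = 0")
    case False
    hence "x \<in> {0..1}" using dens_support[OF False] by auto
    hence "dens x * \<bar>f x\<bar> \<le> dens x * C" using bound dens_nonneg by (intro mult_left_mono)
    also have "\<dots> \<le> dens x * \<bar>C\<bar>" using dens_nonneg[of x] by (intro mult_left_mono) auto
    finally show ?thesis using dens_nonneg[of x] by (simp add: abs_mult mult.commute)
  qed simp
  thus "AE x in lborel. norm (dens x * f x) \<le> norm (C * dens x)" by simp
qed simp

lemma integrable_dens_indicator_Icc: "integrable lborel (\<lambda>x. dens x * indicator {a..b} x)"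
  by (rule integrable_dens_mult[where C=1]) (auto simp: indicator_def)

lemma integrable_dens_moment_Icc: "integrable lborel (\<lambda>x. dens x * (x * indicator {a..b} x))"
  by (rule integrable_dens_mult[where C=1]) (auto simp: indicator_def)

subsection \<open>Distance to a finite set and the distortion\<close>

lemma infdist_le_abs: "a \<in> A \<Longrightarrow> infdist x A \<le> \<bar>x - a\<bar>" for x :: real
  using infdist_le[of a A x] by (simp add: dist_real_def)

lemma le_infdist: "A \<noteq> {} \<Longrightarrow> (\<And>a. a \<in> A \<Longrightarrow> c \<le> \<bar>x - a\<bar>) \<Longrightarrow> c \<le> infdist x A" for x :: real
  by (simp add: infdist_notempty dist_real_def cINF_greatest)

lemma infdist_attained:
  fixes A :: "real set"
  assumes "finite A" "A \<noteq> {}"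
  obtains a where "a \<in> A" "infdist x A = \<bar>x - a\<bar>"
  using infdist_attains_inf[OF finite_imp_closed[OF assms(1)] assms(2)] by (auto simp: dist_real_def)

lemma Min_abs_eq_infdist:
  fixes A :: "real set"
  assumes "finite A" "A \<noteq> {}"
  shows "Min ((\<lambda>a. \<bar>x - a\<bar>) ` A) = infdist x A"
  using assms by (simp add: infdist_notempty cInf_eq_Min dist_real_def)

lemma Min_square_eq_infdist:
  fixes A :: "real set"
  assumes "finite A" "A \<noteq> {}"
  shows "Min ((\<lambda>a. (x - a)\<^sup>2) ` A) = (infdist x A)\<^sup>2"
proof (rule Min_eqI)
  show "finite ((\<lambda>a. (x - a)\<^sup>2) ` A)" using assms by simp
  show "(infdist x A)\<^sup>2 \<le> y" if y: "y \<in> (\<lambda>a. (x - a)\<^sup>2) ` A" for y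
  proof -
    obtain a where a: "a \<in> A" "y = (x - a)\<^sup>2" using y by blast
    have "(infdist x A)\<^sup>2 \<le> \<bar>x - a\<bar>\<^sup>2"
      using infdist_le_abs[OF a(1)] infdist_nonneg by (intro power_mono)
    thus ?thesis using a by simp
  qed
  obtain a where "a \<in> A" "infdist x A = \<bar>x - a\<bar>" using infdist_attained[OF assms] .
  thus "(infdist x A)\<^sup>2 \<in> (\<lambda>a. (x - a)\<^sup>2) ` A" by auto
qed

lemma borel_measurable_infdist [measurable]: "(\<lambda>x::real. infdist x A) \<in> borel_measurable borel"
  by (intro borel_measurable_continuous_onI continuous_on_infdist continuous_on_id)

definition distortion :: "real set \<Rightarrow> real" where
  "distortion A = (\<integral>x. dens x * (infdist x A)\<^sup>2 \<partial>lborel)"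

lemma integrable_distortion:
  fixes A :: "real set"
  assumes "A \<noteq> {}"
  shows "integrable lborel (\<lambda>x. dens x * (infdist x A)\<^sup>2)"
proof -
  obtain a where a: "a \<in> A" using assms by blast
  have "(infdist x A)\<^sup>2 \<le> (1 + \<bar>a\<bar>)\<^sup>2" if "x \<in> {0..1}" for x
    using that infdist_le_abs[OF a, of x] infdist_nonneg by (intro power_mono) auto
  thus ?thesis
    by (intro integrable_dens_mult[where C="(1 + \<bar>a\<bar>)\<^sup>2"]) auto
qed

lemma distortion_nonneg: "0 \<le> distortion A"
  unfolding distortion_def by (rule integral_nonneg_AE) (auto simp: dens_nonneg)

lemma cost_eq_distortion:
  assumes "finite A" "A \<noteq> {}"
  shows "cost A = ennreal (distortion A)"
proof -
  have "cost A = (\<integral>\<^sup>+x. ennreal (dens x) * ennreal ((infdist x A)\<^sup>2) \<partial>lborel)"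
    unfolding cost_def Min_square_eq_infdist[OF assms]
    by (rule nn_integral_P) simp
  also have "\<dots> = (\<integral>\<^sup>+x. ennreal (dens x * (infdist x A)\<^sup>2) \<partial>lborel)"
    by (intro nn_integral_cong) (simp add: ennreal_mult dens_nonneg)
  also have "\<dots> = ennreal (distortion A)" unfolding distortion_def
    by (rule nn_integral_eq_integral[OF integrable_distortion[OF assms(2)]]) (auto simp: dens_nonneg)
  finally show ?thesis .
qed

lemma optimal_distortion_le:
  assumes opt: "optimal_n_means n A" and B: "admissible n B"
  shows "distortion A \<le> distortion B"
proof -
  have A: "admissible n A" using opt by (simp add: optimal_n_means_def)
  have "cost A \<le> cost B" using opt B unfolding optimal_n_means_def by (auto intro: INF_lower)
  thus ?thesis using A B distortion_nonneg[of B] by (simp add: cost_eq_distortion admissible_def)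
qed

lemma voronoi_eq:
  assumes "finite A" "A \<noteq> {}"
  shows "voronoi a A = {x. \<bar>x - a\<bar> = infdist x A}"
  using Min_abs_eq_infdist[OF assms] by (simp add: voronoi_def)

lemma mem_voronoi_iff:
  assumes "finite A" "a \<in> A"
  shows "x \<in> voronoi a A \<longleftrightarrow> (\<forall>b\<in>A. \<bar>x - a\<bar> \<le> \<bar>x - b\<bar>)"
proof -
  have "A \<noteq> {}" using assms(2) by blast
  have "\<bar>x - a\<bar> = infdist x A \<longleftrightarrow> \<bar>x - a\<bar> \<le> infdist x A"
    using infdist_le_abs[OF assms(2), of x] by linarith
  also have "\<dots> \<longleftrightarrow> (\<forall>b\<in>A. \<bar>x - a\<bar> \<le> \<bar>x - b\<bar>)"
  proof
    assume "\<bar>x - a\<bar> \<le> infdist x A"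
    thus "\<forall>b\<in>A. \<bar>x - a\<bar> \<le> \<bar>x - b\<bar>" using infdist_le_abs[of _ A x] by (blast intro: order_trans)
  qed (intro le_infdist[OF \<open>A \<noteq> {}\<close>], auto)
  finally show ?thesis using voronoi_eq[OF assms(1) \<open>A \<noteq> {}\<close>] by simp
qed

lemma voronoi_measurable [measurable]:
  assumes "finite A" "A \<noteq> {}"
  shows "voronoi a A \<in> sets borel"
  unfolding voronoi_eq[OF assms] by measurable

lemma mem_voronoi_right_half:
  assumes "finite A" "p \<in> A" "A \<inter> {p<..<a} = {}" "p \<le> x" "x \<le> (p + a)/2"
  shows "x \<in> voronoi p A"
  unfolding mem_voronoi_iff[OF assms(1,2)]
proof
  fix b assume "b \<in> A"
  hence "b \<le> p \<or> a \<le> b" using assms(3) by force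
  thus "\<bar>x - p\<bar> \<le> \<bar>x - b\<bar>" using assms(4,5) by auto
qed

lemma mem_voronoi_left_half:
  assumes "finite A" "q \<in> A" "A \<inter> {a<..<q} = {}" "(a + q)/2 \<le> x" "x \<le> q"
  shows "x \<in> voronoi q A"
  unfolding mem_voronoi_iff[OF assms(1,2)]
proof
  fix b assume "b \<in> A"
  hence "b \<le> a \<or> q \<le> b" using assms(3) by force
  thus "\<bar>x - q\<bar> \<le> \<bar>x - b\<bar>" using assms(4,5) by auto
qed

lemma not_mem_voronoi:
  assumes "finite A" "a \<in> A" "b \<in> A" "\<bar>x - b\<bar> < \<bar>x - a\<bar>"
  shows "x \<notin> voronoi a A"
  using assms mem_voronoi_iff[OF assms(1,2)] by (meson not_le)

lemma infdist_move_point: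
  fixes A :: "real set"
  assumes "finite A" "a \<in> A"
  shows "(infdist x (insert (a + e) (A - {a})))\<^sup>2
           \<le> (infdist x A)\<^sup>2 + indicator (voronoi a A) x * (e\<^sup>2 - 2 * e * (x - a))"
proof -
  define B where "B = insert (a + e) (A - {a})"
  have "A \<noteq> {}" using assms(2) by blast
  show ?thesis
  proof (cases "x \<in> voronoi a A")
    case True
    hence "infdist x A = \<bar>x - a\<bar>" unfolding voronoi_eq[OF assms(1) \<open>A \<noteq> {}\<close>] by simp
    moreover have "(infdist x B)\<^sup>2 \<le> \<bar>x - (a + e)\<bar>\<^sup>2"
      using infdist_le_abs[of "a + e" B x] infdist_nonneg by (intro power_mono) (auto simp: B_def)
    ultimately show ?thesis using True by (simp add: B_def power2_eq_square algebra_simps)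
  next
    case False
    obtain b where b: "b \<in> A" "infdist x A = \<bar>x - b\<bar>"
      using infdist_attained[OF assms(1) \<open>A \<noteq> {}\<close>] .
    hence "b \<in> B" using False unfolding B_def voronoi_eq[OF assms(1) \<open>A \<noteq> {}\<close>] by auto
    hence "(infdist x B)\<^sup>2 \<le> (infdist x A)\<^sup>2"
      using b infdist_le_abs[of b B x] infdist_nonneg by (intro power_mono) auto
    thus ?thesis using False by (simp add: B_def)
  qed
qed

subsection \<open>Variations of an optimal set\<close>

lemma admissible_replace:
  assumes "admissible n A" "b \<in> A"
  shows "admissible n (insert c (A - {b}))"
proof -
  have "card (insert c (A - {b})) \<le> card (A - {b}) + 1"
    using assms by (simp add: admissible_def card_insert_if)
  also have "\<dots> = card A"
    using assms card_gt_0_iff[of A] by (auto simp: admissible_def card_Diff_singleton)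
  finally show ?thesis using assms by (auto simp: admissible_def)
qed

lemma optimal_no_strict_improvement:
  assumes opt: "optimal_n_means n A" and B: "admissible n B"
    and le: "\<And>x. x \<in> blocks \<Longrightarrow> infdist x B \<le> infdist x A"
    and uv: "u < v" "{u<..<v} \<subseteq> J m"
    and less: "\<And>x. x \<in> {u<..<v} \<Longrightarrow> infdist x B < infdist x A"
  shows False
proof -
  have "A \<noteq> {}" using opt by (simp add: optimal_n_means_def admissible_def)
  have "B \<noteq> {}" using B by (simp add: admissible_def)
  define f where "f x = dens x * (infdist x A)\<^sup>2 - dens x * (infdist x B)\<^sup>2" for x
  have int_f: "integrable lborel f"
    unfolding f_def by (intro Bochner_Integration.integrable_diff integrable_distortion \<open>A \<noteq> {}\<close> \<open>B \<noteq> {}\<close>)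
  have f_nonneg: "0 \<le> f x" for x
  proof (cases "dens x = 0")
    case False
    have "infdist x B \<le> infdist x A" using le[OF dens_support[OF False]] .
    hence "(infdist x B)\<^sup>2 \<le> (infdist x A)\<^sup>2" using infdist_nonneg by (intro power_mono)
    thus ?thesis unfolding f_def using dens_nonneg[of x]
      by (simp add: right_diff_distrib[symmetric])
  qed (simp add: f_def)
  have "integral\<^sup>L lborel f = distortion A - distortion B"
    unfolding f_def distortion_def
    by (intro Bochner_Integration.integral_diff integrable_distortion \<open>A \<noteq> {}\<close> \<open>B \<noteq> {}\<close>)
  also have "\<dots> \<le> 0" using optimal_distortion_le[OF opt B] by simp
  finally have "integral\<^sup>L lborel f \<le> 0" .
  moreover have "0 \<le> integral\<^sup>L lborel f" by (rule integral_nonneg_AE) (simp add: f_nonneg)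
  ultimately have "integral\<^sup>L lborel f = 0" by linarith
  hence f0: "AE x in lborel. f x = 0" using integral_nonneg_eq_0_iff_AE[OF int_f] f_nonneg by simp
  have "f x \<noteq> 0" if x: "x \<in> {u<..<v}" for x
  proof -
    have "0 < dens x" using x uv dens_J by auto
    moreover have "(infdist x B)\<^sup>2 < (infdist x A)\<^sup>2"
      using less[OF x] infdist_nonneg by (intro power_strict_mono) auto
    ultimately show ?thesis unfolding f_def by simp
  qed
  with f0 have "AE x in lborel. x \<notin> {u<..<v}" by (elim AE_mp) (blast intro: AE_I2)
  hence "emeasure lborel {u<..<v} = 0" by (subst (asm) AE_iff_measurable[of "{u<..<v}"]) auto
  thus False using uv by simp
qed

definition voronoi_moment :: "real set \<Rightarrow> real \<Rightarrow> real" where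
  "voronoi_moment A a = (\<integral>x. dens x * ((x - a) * indicator (voronoi a A) x) \<partial>lborel)"

lemma integrable_voronoi_moment:
  assumes "finite A" "a \<in> A"
  shows "integrable lborel (\<lambda>x. dens x * ((x - a) * indicator (voronoi a A) x))"
proof -
  have [measurable]: "voronoi a A \<in> sets borel" using assms by (intro voronoi_measurable) auto
  show ?thesis by (rule integrable_dens_mult[where C="1 + \<bar>a\<bar>"]) (auto simp: indicator_def)
qed

text \<open>Otherwise moving a by a small multiple of its moment reduces the distortion.\<close>

lemma optimal_voronoi_moment_eq_0:
  assumes opt: "optimal_n_means n A" and a: "a \<in> A"
  shows "voronoi_moment A a = 0"
proof (rule ccontr)
  assume moment: "voronoi_moment A a \<noteq> 0"
  have A: "admissible n A" using opt by (simp add: optimal_n_means_def)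
  hence fin: "finite A" "A \<noteq> {}" by (simp_all add: admissible_def)
  define V where "V = voronoi a A"
  have [measurable]: "V \<in> sets borel" unfolding V_def using fin by measurable
  define I where "I = voronoi_moment A a"
  define M where "M = (\<integral>x. dens x * indicator V x \<partial>lborel)"
  have "0 \<le> M" unfolding M_def by (rule integral_nonneg_AE) (auto simp: dens_nonneg)
  define e where "e = I / (M + 1)"
  define B where "B = insert (a + e) (A - {a})"
  have B: "admissible n B" unfolding B_def by (rule admissible_replace[OF A a])
  hence "B \<noteq> {}" by (simp add: admissible_def)
  define g where "g x = dens x * (infdist x A)\<^sup>2 + dens x * (indicator V x * (e\<^sup>2 - 2 * e * (x - a)))" for x
  have pointwise: "dens x * (infdist x B)\<^sup>2 \<le> g x" for x
    using mult_left_mono[OF infdist_move_point[OF fin(1) a, of x e] dens_nonneg]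
    by (simp add: g_def B_def V_def distrib_left)
  have int_V: "integrable lborel (\<lambda>x. dens x * indicator V x)"
    by (rule integrable_dens_mult[where C=1]) (auto simp: indicator_def)
  have int_moment: "integrable lborel (\<lambda>x. dens x * ((x - a) * indicator V x))"
    unfolding V_def by (rule integrable_voronoi_moment[OF fin(1) a])
  have g_eq: "g = (\<lambda>x. dens x * (infdist x A)\<^sup>2
                    + (e\<^sup>2 * (dens x * indicator V x) - (2 * e) * (dens x * ((x - a) * indicator V x))))"
    unfolding g_def by (simp add: fun_eq_iff algebra_simps)
  have int_g: "integrable lborel g"
    unfolding g_eq using int_V int_moment integrable_distortion[OF fin(2)] by simp
  have "distortion B \<le> integral\<^sup>L lborel g"
    unfolding distortion_def
    by (rule integral_mono[OF integrable_distortion[OF \<open>B \<noteq> {}\<close>] int_g pointwise])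
  also have "integral\<^sup>L lborel g = distortion A + (e\<^sup>2 * M - 2 * e * I)"
    unfolding g_eq using int_V int_moment integrable_distortion[OF fin(2)]
    by (simp add: distortion_def M_def I_def voronoi_moment_def V_def)
  also have "e\<^sup>2 * M - 2 * e * I < 0"
  proof -
    have I_eq: "I = e * (M + 1)" using \<open>0 \<le> M\<close> by (simp add: e_def)
    hence "e \<noteq> 0" using moment by (auto simp: I_def)
    hence "0 < e\<^sup>2 * (M + 2)" using \<open>0 \<le> M\<close> by simp
    thus ?thesis unfolding I_eq by (simp add: power2_eq_square algebra_simps)
  qed
  finally have "distortion B < distortion A" by simp
  thus False using optimal_distortion_le[OF opt B] by simp
qed

definition support_point :: "real \<Rightarrow> bool" where
  "support_point c \<longleftrightarrow> (\<forall>e>0. \<exists>m u v. u < v \<and> {u..v} \<subseteq> J m \<inter> ball c e)"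

lemma support_point_J:
  assumes "c \<in> J m"
  shows "support_point c"
  unfolding support_point_def
proof (intro allI impI)
  fix e :: real assume "0 < e"
  obtain k where m: "m = Suc k" using assms by (cases m) auto
  define l r :: real where "l = 1 - 1/3^k" and "r = 1 - 2/3^Suc k"
  have "l < r" "l \<le> c" "c \<le> r" using assms by (auto simp: m J_Suc l_def r_def field_simps)
  define u v where "u = max l (c - e/2)" and "v = min r (c + e/2)"
  have "u < v" using \<open>l < r\<close> \<open>l \<le> c\<close> \<open>c \<le> r\<close> \<open>0 < e\<close> by (auto simp: u_def v_def)
  moreover have "{u..v} \<subseteq> J m \<inter> ball c e"
    using \<open>0 < e\<close> by (auto simp: u_def v_def m J_Suc l_def r_def dist_real_def)
  ultimately show "\<exists>m u v. u < v \<and> {u..v} \<subseteq> J m \<inter> ball c e" by blast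
qed

lemma support_point_1: "support_point 1"
  unfolding support_point_def
proof (intro allI impI)
  fix e :: real assume "0 < e"
  obtain k where k: "(1/3::real)^k < e" using real_arch_pow_inv[OF \<open>0 < e\<close>, of "1/3"] by auto
  have "{1 - 1/3^k .. 1 - 2/3^Suc k} \<subseteq> J (Suc k) \<inter> ball 1 e"
    using k by (auto simp: J_Suc dist_real_def power_divide)
  moreover have "1 - 1/3^k < (1 - 2/3^Suc k :: real)" by (simp add: field_simps)
  ultimately show "\<exists>m u v. u < v \<and> {u..v} \<subseteq> J m \<inter> ball 1 e" by blast
qed

text \<open>The strict gain comes from a small interval of positive density near c, on which c is
  closer than every point of A.\<close>

lemma optimal_replace_by_new_point:
  assumes opt: "optimal_n_means n A" and b: "b \<in> A" and c: "c \<notin> A" "support_point c"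
    and closer: "\<And>x. x \<in> blocks \<Longrightarrow> \<exists>b'\<in>insert c (A - {b}). \<bar>x - b'\<bar> \<le> \<bar>x - b\<bar>"
  shows False
proof -
  have A: "admissible n A" using opt by (simp add: optimal_n_means_def)
  hence fin: "finite A" "A \<noteq> {}" by (simp_all add: admissible_def)
  define B where "B = insert c (A - {b})"
  have B: "admissible n B" unfolding B_def by (rule admissible_replace[OF A b])
  define d where "d = infdist c A"
  have "0 < d" unfolding d_def using fin c(1) by (intro infdist_pos_not_in_closed finite_imp_closed)
  then obtain m u v where uv: "u < v" "{u..v} \<subseteq> J m \<inter> ball c (d/2)"
    using c(2) unfolding support_point_def by (meson half_gt_zero)
  show False
  proof (rule optimal_no_strict_improvement[OF opt B _ uv(1)])
    show "{u<..<v} \<subseteq> J m" using uv(2) by auto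
    fix x assume "x \<in> blocks"
    obtain b0 where b0: "b0 \<in> A" "infdist x A = \<bar>x - b0\<bar>" using infdist_attained[OF fin] .
    show "infdist x B \<le> infdist x A"
    proof (cases "b0 = b")
      case True
      then obtain b' where "b' \<in> B" "\<bar>x - b'\<bar> \<le> \<bar>x - b\<bar>" using closer[OF \<open>x \<in> blocks\<close>] by (auto simp: B_def)
      thus ?thesis using b0 True infdist_le_abs[of b' B x] by simp
    next
      case False
      hence "b0 \<in> B" using b0 by (simp add: B_def)
      thus ?thesis using b0 infdist_le_abs[of b0 B x] by simp
    qed
  next
    fix x assume "x \<in> {u<..<v}"
    hence "x \<in> {u..v}" by simp
    hence "x \<in> ball c (d/2)" using uv(2) by blast
    hence near: "\<bar>x - c\<bar> < d/2" by (simp add: dist_real_def abs_minus_commute)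
    have "infdist x B \<le> \<bar>x - c\<bar>" by (rule infdist_le_abs) (simp add: B_def)
    also have "\<dots> < infdist x A"
      using infdist_triangle[of c A x] near by (simp add: d_def dist_real_def abs_minus_commute)
    finally show "infdist x B < infdist x A" .
  qed
qed

lemma optimal_no_redundant_point:
  assumes opt: "optimal_n_means n A" and a: "a \<in> A"
    and redundant: "\<And>x. x \<in> blocks \<Longrightarrow> \<exists>b\<in>A - {a}. \<bar>x - b\<bar> \<le> \<bar>x - a\<bar>"
  shows False
proof -
  have "finite A" using opt by (simp add: optimal_n_means_def admissible_def)
  hence "infinite ({0<..<1/3::real} - A)" by (intro Diff_infinite_finite) auto
  then obtain c where c: "c \<in> {0<..<1/3}" "c \<notin> A" using infinite_imp_nonempty by blast
  have "c \<in> J 1" unfolding J_1 using c(1) by simp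
  hence "support_point c" by (rule support_point_J)
  show False
    by (rule optimal_replace_by_new_point[OF opt a c(2) \<open>support_point c\<close>]) (use redundant in blast)
qed

lemma optimal_replace:
  assumes opt: "optimal_n_means n A" and b: "b \<in> A" and c: "c \<noteq> b" "support_point c"
    and closer: "\<And>x. x \<in> blocks \<Longrightarrow> \<exists>b'\<in>insert c (A - {b}). \<bar>x - b'\<bar> \<le> \<bar>x - b\<bar>"
  shows False
proof (cases "c \<in> A")
  case True
  hence "insert c (A - {b}) = A - {b}" using c(1) by auto
  thus False using optimal_no_redundant_point[OF opt b] closer by metis
qed (rule optimal_replace_by_new_point[OF opt b _ c(2) closer])

subsection \<open>Distortion bounds\<close>

lemma integral_indicator_Icc_FTC:
  fixes f F :: "real \<Rightarrow> real"
  assumes "a \<le> b" "\<And>x. (F has_real_derivative f x) (at x)" "continuous_on {a..b} f"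
  shows "(\<integral>x. indicator {a..b} x * f x \<partial>lborel) = F b - F a"
proof -
  have "(\<integral>x. indicator {a..b} x *\<^sub>R f x \<partial>lborel) = F b - F a"
    by (rule integral_FTC_atLeastAtMost[OF assms(1) _ assms(3)])
       (use assms(2) in \<open>auto simp: has_real_derivative_iff_has_vector_derivative
                                intro: has_vector_derivative_at_within\<close>)
  thus ?thesis by simp
qed

lemma integrable_indicator_Icc_continuous:
  fixes f :: "real \<Rightarrow> real"
  assumes "continuous_on UNIV f"
  shows "integrable lborel (\<lambda>x. indicator {a..b} x * f x)"
  using borel_integrable_atLeastAtMost[where f=f and a=a and b=b] assms
  by (simp add: continuous_on_eq_continuous_at mult.commute)

lemma dens_infdist_two_points_le:
  "dens x * (infdist x {1/6, 5/6})\<^sup>2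
     \<le> indicator {0..1/3} x * (3/2 * (x - 1/6)\<^sup>2) + indicator {2/3..7/9} x * (9/4 * (x - 5/6)\<^sup>2)
         + 1/36 * (dens x * indicator tail x)"
  (is "_ \<le> ?h x")
proof (cases "dens x = 0")
  case True
  thus ?thesis using dens_nonneg[of x] by (simp add: indicator_def)
next
  case False
  have sq_le: "(infdist x {1/6, 5/6})\<^sup>2 \<le> (x - b)\<^sup>2" if "b \<in> {1/6, 5/6}" for b
    using power_mono[OF infdist_le_abs[OF that, of x] infdist_nonneg, of 2] by simp
  consider "x \<in> {0..1/3}" | "x \<in> {2/3..7/9}" | "x \<in> tail" | "x \<in> {7/9<..<8/9}"
    using dens_support[OF False] by force
  thus ?thesis
  proof cases
    case 1
    thus ?thesis using sq_le[of "1/6"] by (simp add: dens_J1 indicator_def)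
  next
    case 2
    thus ?thesis using sq_le[of "5/6"] by (simp add: dens_J2 indicator_def)
  next
    case 3
    have "\<bar>x - 5/6\<bar> \<le> \<bar>1/6\<bar>" using 3 by auto
    hence "(x - 5/6)\<^sup>2 \<le> (1/6)\<^sup>2" by (simp only: abs_le_square_iff)
    hence "dens x * (infdist x {1/6, 5/6})\<^sup>2 \<le> dens x * (1/36)"
      using sq_le[of "5/6"] dens_nonneg[of x] by (intro mult_left_mono) (auto simp: power2_eq_square)
    thus ?thesis using 3 by (simp add: indicator_def)
  next
    case 4 thus ?thesis using dens_gaps False by auto
  qed
qed

lemma distortion_two_points: "distortion {1/6, 5/6} \<le> 29/1944"
proof -
  define h where "h x = indicator {0..1/3} x * (3/2 * (x - 1/6)\<^sup>2) + indicator {2/3..7/9} x * (9/4 * (x - 5/6)\<^sup>2)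
                          + 1/36 * (dens x * indicator tail x)" for x
  have int1: "integrable lborel (\<lambda>x. indicator {0..1/3::real} x * (3/2 * (x - 1/6)\<^sup>2))"
    by (rule integrable_indicator_Icc_continuous) (intro continuous_intros)
  have int2: "integrable lborel (\<lambda>x. indicator {2/3..7/9::real} x * (9/4 * (x - 5/6)\<^sup>2))"
    by (rule integrable_indicator_Icc_continuous) (intro continuous_intros)
  have "integrable lborel h"
    unfolding h_def using int1 int2 integrable_dens_indicator_Icc by (intro Bochner_Integration.integrable_add) auto
  moreover have "dens x * (infdist x {1/6, 5/6})\<^sup>2 \<le> h x" for x
    unfolding h_def by (rule dens_infdist_two_points_le)
  ultimately have "distortion {1/6, 5/6} \<le> integral\<^sup>L lborel h" unfolding distortion_def
    by (intro integral_mono[OF integrable_distortion]) auto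
  also have "integral\<^sup>L lborel h = (\<integral>x. indicator {0..1/3} x * (3/2 * (x - 1/6)\<^sup>2) \<partial>lborel)
      + (\<integral>x. indicator {2/3..7/9} x * (9/4 * (x - 5/6)\<^sup>2) \<partial>lborel) + 1/36 * (\<integral>x. dens x * indicator tail x \<partial>lborel)"
    unfolding h_def using int1 int2 integrable_dens_indicator_Icc by simp
  also have "(\<integral>x. indicator {0..1/3::real} x * (3/2 * (x - 1/6)\<^sup>2) \<partial>lborel) = (1/3 - 1/6)^3/2 - (0 - 1/6)^3/2"
    by (rule integral_indicator_Icc_FTC[where F="\<lambda>x. (x - 1/6)^3/2"])
       (auto intro!: derivative_eq_intros continuous_intros simp: power2_eq_square)
  also have "(\<integral>x. indicator {2/3..7/9::real} x * (9/4 * (x - 5/6)\<^sup>2) \<partial>lborel) = 3/4 * (7/9 - 5/6)^3 - 3/4 * (2/3 - 5/6)^3"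
    by (rule integral_indicator_Icc_FTC[where F="\<lambda>x. 3/4 * (x - 5/6)^3"])
       (auto intro!: derivative_eq_intros continuous_intros simp: power2_eq_square)
  finally show ?thesis by (simp add: integral_dens_tail power3_eq_cube)
qed

lemma distortion_ge_if_above_J1:
  assumes "A \<noteq> {}" and above: "\<And>a. a \<in> A \<Longrightarrow> 1/3 \<le> a"
  shows "1/54 \<le> distortion A"
proof -
  have int: "integrable lborel (\<lambda>x. indicator {0..1/3::real} x * (3/2 * (1/3 - x)\<^sup>2))"
    by (rule integrable_indicator_Icc_continuous) (intro continuous_intros)
  have pointwise: "indicator {0..1/3} x * (3/2 * (1/3 - x)\<^sup>2) \<le> dens x * (infdist x A)\<^sup>2" for x
  proof (cases "x \<in> {0..1/3}")
    case True
    have "1/3 - x \<le> infdist x A" using above by (intro le_infdist[OF assms(1)]) force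
    hence "(1/3 - x)\<^sup>2 \<le> (infdist x A)\<^sup>2" using True by (intro power_mono) auto
    thus ?thesis using True by (simp add: dens_J1)
  qed (simp add: dens_nonneg)
  have "(\<integral>x. indicator {0..1/3::real} x * (3/2 * (1/3 - x)\<^sup>2) \<partial>lborel) = (1/3 - 1/3)^3/2 - (0 - 1/3)^3/2"
    by (rule integral_indicator_Icc_FTC[where F="\<lambda>x. (x - 1/3)^3/2"])
       (auto intro!: derivative_eq_intros continuous_intros simp: power2_eq_square field_simps)
  moreover have "(\<integral>x. indicator {0..1/3} x * (3/2 * (1/3 - x)\<^sup>2) \<partial>lborel) \<le> distortion A"
    unfolding distortion_def by (rule integral_mono[OF int integrable_distortion[OF assms(1)] pointwise])
  ultimately show ?thesis by (simp add: power3_eq_cube)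
qed

text \<open>On the tail, (x - 2/3)^2 is bounded below by its tangent line at 17/18.\<close>

lemma distortion_ge_if_below_tail:
  assumes "A \<noteq> {}" and below: "\<And>a. a \<in> A \<Longrightarrow> a \<le> 2/3"
  shows "25/1296 \<le> distortion A"
proof -
  have pointwise: "5/9 * (dens x * (x * indicator tail x)) - 145/324 * (dens x * indicator tail x)
                     \<le> dens x * (infdist x A)\<^sup>2" for x
  proof (cases "x \<in> tail")
    case True
    have "x - 2/3 \<le> infdist x A" using below by (intro le_infdist[OF assms(1)]) force
    hence "(x - 2/3)\<^sup>2 \<le> (infdist x A)\<^sup>2" using True by (intro power_mono) auto
    moreover have "5/9 * x - 145/324 \<le> (x - 2/3)\<^sup>2"
      using zero_le_power2[of "x - 17/18"] by (simp add: power2_eq_square algebra_simps)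
    ultimately have "dens x * (5/9 * x - 145/324) \<le> dens x * (infdist x A)\<^sup>2"
      using dens_nonneg[of x] by (intro mult_left_mono) auto
    thus ?thesis using True by (simp add: algebra_simps)
  qed (simp add: dens_nonneg)
  have "(\<integral>x. 5/9 * (dens x * (x * indicator tail x)) - 145/324 * (dens x * indicator tail x) \<partial>lborel)
          \<le> distortion A"
    unfolding distortion_def
    by (rule integral_mono[OF _ integrable_distortion[OF assms(1)] pointwise])
       (simp add: integrable_dens_moment_Icc integrable_dens_indicator_Icc)
  moreover have "(\<integral>x. 5/9 * (dens x * (x * indicator tail x)) - 145/324 * (dens x * indicator tail x) \<partial>lborel)
                   = 25/1296"
    using integrable_dens_moment_Icc integrable_dens_indicator_Icc
    by (simp add: integral_dens_tail integral_dens_tail_moment)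
  ultimately show ?thesis by simp
qed

lemma optimal_distortion_le_two_points:
  assumes "optimal_n_means n A" "2 \<le> n"
  shows "distortion A \<le> 29/1944"
proof -
  have "admissible n {1/6, 5/6}" using assms(2) by (simp add: admissible_def)
  thus ?thesis using optimal_distortion_le[OF assms(1)] distortion_two_points by fastforce
qed

subsection \<open>Signs of Voronoi moments\<close>

lemma voronoi_moment_J1_pos:
  assumes fin: "finite A" and p: "p \<in> A" and a: "a \<in> A" "p < a"
    and "0 \<le> p" "3 * p < a" "(p + a)/2 < 1/3" and gap: "A \<inter> {p<..<a} = {}"
  shows "0 < voronoi_moment A p"
proof -
  define u where "u = (p + a)/2"
  define V where "V = voronoi p A"
  have "0 \<le> u" "u < 1/3" using assms by (auto simp: u_def)
  define g where "g x = indicator {0..u} x * (3/2 * (x - p))" for x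
  have g_le: "g x \<le> dens x * ((x - p) * indicator V x)" for x
  proof (cases "x \<in> {0..u}")
    case True
    hence dx: "dens x = 3/2" using \<open>u < 1/3\<close> by (intro dens_J1) auto
    have "x \<in> V" if "p \<le> x"
      unfolding V_def by (rule mem_voronoi_right_half[OF fin p gap that]) (use True in \<open>simp add: u_def\<close>)
    thus ?thesis unfolding dx g_def using True by (cases "p \<le> x") (auto simp: indicator_def)
  next
    case False
    hence "dens x = 0 \<or> u < x" using dens_support by force
    moreover have "x \<notin> V" if "u < x"
      unfolding V_def by (rule not_mem_voronoi[OF fin p a(1)]) (use that a(2) in \<open>auto simp: u_def\<close>)
    ultimately show ?thesis using False by (auto simp: g_def)
  qed
  have "0 < 3/4 * (u - p)\<^sup>2 - 3/4 * (0 - p)\<^sup>2"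
    using power_strict_mono[of p "u - p" 2] assms by (simp add: u_def)
  also have "\<dots> = integral\<^sup>L lborel g"
    unfolding g_def using \<open>0 \<le> u\<close>
    by (intro integral_indicator_Icc_FTC[where F="\<lambda>x. 3/4 * (x - p)\<^sup>2", symmetric])
       (auto intro!: derivative_eq_intros continuous_intros)
  also have "\<dots> \<le> voronoi_moment A p"
    unfolding voronoi_moment_def V_def[symmetric]
  proof (rule integral_mono[OF _ _ g_le])
    show "integrable lborel g"
      unfolding g_def by (rule integrable_indicator_Icc_continuous) (intro continuous_intros)
    show "integrable lborel (\<lambda>x. dens x * ((x - p) * indicator V x))"
      unfolding V_def by (rule integrable_voronoi_moment[OF fin p])
  qed
  finally show ?thesis .
qed

lemma right_tail_moment_bound:
  fixes w q :: real
  assumes "2/3 < w" "w \<le> 3/4" "2 * w - 1/2 \<le> q"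
  shows "9/8 * (7/9 - q)\<^sup>2 - 9/8 * (w - q)\<^sup>2 + (17/72 - q/4) < 0"
proof -
  have "9/8 * (7/9 - q)\<^sup>2 - 9/8 * (w - q)\<^sup>2 + (17/72 - q/4)
          = 27/8 * (w - 2/3) * (w - 23/27) - (q - (2 * w - 1/2)) * (9/4 * (7/9 - w) + 1/4)"
    by (simp add: power2_eq_square field_simps)
  moreover have "27/8 * (w - 2/3) * (w - 23/27) < 0" using assms by (intro mult_pos_neg) auto
  moreover have "0 \<le> (q - (2 * w - 1/2)) * (9/4 * (7/9 - w) + 1/4)" using assms by simp
  ultimately show ?thesis by linarith
qed

lemma dens_moment_le_right_bound:
  assumes w: "2/3 < w" "w \<le> 3/4" "2 * w - 1/2 \<le> q"
    and V_in: "\<And>x. w \<le> x \<Longrightarrow> x \<le> q \<Longrightarrow> x \<in> V" and V_out: "\<And>x. x < w \<Longrightarrow> x \<notin> V"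
  shows "dens x * ((x - q) * indicator V x)
           \<le> indicator {w..7/9} x * (9/4 * (x - q)) + (dens x * (x * indicator tail x) - q * (dens x * indicator tail x))"
proof -
  consider "x < w" | "w \<le> x" "x \<le> 7/9" | "7/9 < x" "x < 8/9" | "x \<in> tail" | "1 < x"
    by fastforce
  thus ?thesis
  proof cases
    case 1
    thus ?thesis using V_out[OF 1] w by (simp add: indicator_def)
  next
    case 2
    hence dx: "dens x = 9/4" using w by (intro dens_J2) auto
    have "x \<le> q" using 2 w by linarith
    thus ?thesis unfolding dx using 2 w V_in[of x] by (simp add: indicator_def)
  next
    case 3
    hence "dens x = 0" by (intro dens_gaps) auto
    thus ?thesis using 3 w by (simp add: indicator_def)
  next
    case 4
    have "(x - q) * indicator V x \<le> x - q"
      using 4 w V_in[of x] by (cases "x \<le> q") (auto simp: indicator_def)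
    hence "dens x * ((x - q) * indicator V x) \<le> dens x * (x - q)"
      using dens_nonneg[of x] by (simp add: mult_left_mono)
    thus ?thesis using 4 w by (simp add: indicator_def algebra_simps)
  next
    case 5
    hence "dens x = 0" using dens_support by force
    thus ?thesis using 5 w by (simp add: indicator_def)
  qed
qed

lemma voronoi_moment_right_neg:
  assumes fin: "finite A" and q: "q \<in> A" and a: "a \<in> A" "a < q"
    and "q \<le> 1" "2/3 < (a + q)/2" "a \<le> 1/2" and gap: "A \<inter> {a<..<q} = {}"
  shows "voronoi_moment A q < 0"
proof -
  define w where "w = (a + q)/2"
  have w: "2/3 < w" "w \<le> 3/4" "2 * w - 1/2 \<le> q" using assms by (auto simp: w_def field_simps)
  define V where "V = voronoi q A"
  have V_in: "x \<in> V" if "w \<le> x" "x \<le> q" for x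
    unfolding V_def by (rule mem_voronoi_left_half[OF fin q gap]) (use that in \<open>simp_all add: w_def\<close>)
  have V_out: "x \<notin> V" if "x < w" for x
    unfolding V_def by (rule not_mem_voronoi[OF fin q a(1)]) (use that a(2) in \<open>auto simp: w_def\<close>)
  define h1 where "h1 x = indicator {w..7/9} x * (9/4 * (x - q))" for x
  define h where "h x = h1 x + (dens x * (x * indicator tail x) - q * (dens x * indicator tail x))" for x
  have int_h1: "integrable lborel h1"
    unfolding h1_def by (rule integrable_indicator_Icc_continuous) (intro continuous_intros)
  have le_h: "dens x * ((x - q) * indicator V x) \<le> h x" for x
    unfolding h_def h1_def using dens_moment_le_right_bound[OF w V_in V_out] .
  have "voronoi_moment A q \<le> integral\<^sup>L lborel h"
    unfolding voronoi_moment_def V_def[symmetric]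
  proof (rule integral_mono[OF _ _ le_h])
    show "integrable lborel (\<lambda>x. dens x * ((x - q) * indicator V x))"
      unfolding V_def by (rule integrable_voronoi_moment[OF fin q])
    show "integrable lborel h"
      unfolding h_def using int_h1 integrable_dens_moment_Icc integrable_dens_indicator_Icc by simp
  qed
  also have "integral\<^sup>L lborel h = integral\<^sup>L lborel h1 + (17/72 - q/4)"
    unfolding h_def using int_h1 integrable_dens_moment_Icc integrable_dens_indicator_Icc
    by (simp add: integral_dens_tail integral_dens_tail_moment)
  also have "integral\<^sup>L lborel h1 = 9/8 * (7/9 - q)\<^sup>2 - 9/8 * (w - q)\<^sup>2"
    unfolding h1_def using w
    by (intro integral_indicator_Icc_FTC[where F="\<lambda>x. 9/8 * (x - q)\<^sup>2"])
       (auto intro!: derivative_eq_intros continuous_intros)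
  finally show ?thesis using right_tail_moment_bound[OF w] by linarith
qed

lemma voronoi_moment_1_neg:
  assumes fin: "finite A" and one: "1 \<in> A" and gap: "A \<inter> {1/3<..<1} = {}"
  shows "voronoi_moment A 1 < 0"
proof -
  define V where "V = voronoi 1 A"
  define g where "g y = indicator {2/3..7/9} y * (9/4 * (y - 1))" for y :: real
  have le_g: "dens y * ((y - 1) * indicator V y) \<le> g y" for y
  proof (cases "y \<in> {2/3..7/9}")
    case True
    hence "y \<in> V" unfolding V_def by (intro mem_voronoi_left_half[OF fin one gap]) auto
    thus ?thesis using True by (simp add: g_def dens_J2)
  next
    case False
    have "dens y * ((y - 1) * indicator V y) \<le> 0"
    proof (cases "dens y = 0")
      case False
      hence "y \<le> 1" using dens_support by force
      hence "(y - 1) * indicator V y \<le> 0" by (simp add: indicator_def)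
      thus ?thesis by (rule mult_nonneg_nonpos[OF dens_nonneg])
    qed simp
    thus ?thesis using False by (simp add: g_def)
  qed
  have "voronoi_moment A 1 \<le> integral\<^sup>L lborel g"
    unfolding voronoi_moment_def V_def[symmetric]
  proof (rule integral_mono[OF _ _ le_g])
    show "integrable lborel (\<lambda>y. dens y * ((y - 1) * indicator V y))"
      unfolding V_def by (rule integrable_voronoi_moment[OF fin one])
    show "integrable lborel g"
      unfolding g_def by (rule integrable_indicator_Icc_continuous) (intro continuous_intros)
  qed
  also have "integral\<^sup>L lborel g = 9/8 * (7/9 - 1)\<^sup>2 - 9/8 * (2/3 - 1)\<^sup>2"
    unfolding g_def
    by (intro integral_indicator_Icc_FTC[where F="\<lambda>y. 9/8 * (y - 1)\<^sup>2"])
       (auto intro!: derivative_eq_intros continuous_intros)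
  also have "\<dots> < 0" by (simp add: power2_eq_square)
  finally show ?thesis .
qed

lemma voronoi_moment_0_pos:
  assumes fin: "finite A" and zero: "0 \<in> A" and gap: "A \<inter> {0<..<2/3} = {}"
  shows "0 < voronoi_moment A 0"
proof -
  define V where "V = voronoi 0 A"
  define g where "g y = indicator {0..1/3} y * (3/2 * y)" for y :: real
  have g_le: "g y \<le> dens y * ((y - 0) * indicator V y)" for y
  proof (cases "y \<in> {0..1/3}")
    case True
    hence "y \<in> V" unfolding V_def by (intro mem_voronoi_right_half[OF fin zero gap]) auto
    thus ?thesis using True by (simp add: g_def dens_J1)
  next
    case False
    have "0 \<le> dens y * ((y - 0) * indicator V y)"
    proof (cases "dens y = 0")
      case False
      hence "0 \<le> y" using dens_support by force
      hence "0 \<le> (y - 0) * indicator V y" by (simp add: indicator_def)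
      thus ?thesis by (rule mult_nonneg_nonneg[OF dens_nonneg])
    qed simp
    thus ?thesis using False by (simp add: g_def)
  qed
  have "0 < 3/4 * (1/3)\<^sup>2 - 3/4 * (0::real)\<^sup>2" by simp
  also have "\<dots> = integral\<^sup>L lborel g"
    unfolding g_def
    by (intro integral_indicator_Icc_FTC[where F="\<lambda>y. 3/4 * y\<^sup>2", symmetric])
       (auto intro!: derivative_eq_intros continuous_intros)
  also have "\<dots> \<le> voronoi_moment A 0"
    unfolding voronoi_moment_def V_def[symmetric]
  proof (rule integral_mono[OF _ _ g_le])
    show "integrable lborel g"
      unfolding g_def by (rule integrable_indicator_Icc_continuous) (intro continuous_intros)
    show "integrable lborel (\<lambda>y. dens y * ((y - 0) * indicator V y))"
      unfolding V_def by (rule integrable_voronoi_moment[OF fin zero])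
  qed
  finally show ?thesis .
qed

lemma finite_left_neighbour:
  fixes A :: "real set"
  assumes "finite A" "b \<in> A" "b < a"
  obtains p where "p \<in> A" "b \<le> p" "p < a" "A \<inter> {p<..<a} = {}"
proof -
  define L where "L = {x\<in>A. x < a}"
  have L: "finite L" "b \<in> L" using assms by (auto simp: L_def)
  show thesis
  proof
    show "Max L \<in> A" "Max L < a" using Max_in[OF L(1)] L(2) by (auto simp: L_def)
    show "b \<le> Max L" by (rule Max_ge[OF L])
    show "A \<inter> {Max L<..<a} = {}" using Max_ge[OF L(1)] by (force simp: L_def)
  qed
qed

lemma finite_right_neighbour:
  fixes A :: "real set"
  assumes "finite A" "b \<in> A" "a < b"
  obtains q where "q \<in> A" "q \<le> b" "a < q" "A \<inter> {a<..<q} = {}"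
proof -
  define R where "R = {x\<in>A. a < x}"
  have R: "finite R" "b \<in> R" using assms by (auto simp: R_def)
  show thesis
  proof
    show "Min R \<in> A" "a < Min R" using Min_in[OF R(1)] R(2) by (auto simp: R_def)
    show "Min R \<le> b" by (rule Min_le[OF R])
    show "A \<inter> {a<..<Min R} = {}" using Min_le[OF R(1)] by (force simp: R_def)
  qed
qed

lemma optimal_meets_J1:
  assumes opt: "optimal_n_means n A" and "2 \<le> n"
  shows "A \<inter> J 1 \<noteq> {}"
proof
  assume none: "A \<inter> J 1 = {}"
  have "A \<noteq> {}" using opt by (simp add: optimal_n_means_def admissible_def)
  show False
  proof (cases "\<exists>l\<in>A. l < 0")
    case True
    then obtain l where l: "l \<in> A" "l < 0" by blast
    have "support_point 0" by (rule support_point_J[of _ 1]) (unfold J_1, simp)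
    show False
      by (rule optimal_replace[OF opt l(1) _ \<open>support_point 0\<close>]) (use l(2) in auto)
  next
    case False
    hence "1/3 \<le> a" if "a \<in> A" for a using none that unfolding J_1 by force
    hence "1/54 \<le> distortion A" using distortion_ge_if_above_J1[OF \<open>A \<noteq> {}\<close>] by blast
    thus False using optimal_distortion_le_two_points[OF assms] by simp
  qed
qed

lemma optimal_meets_right:
  assumes opt: "optimal_n_means n A" and "2 \<le> n"
  shows "A \<inter> {2/3..1} \<noteq> {}"
proof
  assume none: "A \<inter> {2/3..1} = {}"
  have "A \<noteq> {}" using opt by (simp add: optimal_n_means_def admissible_def)
  show False
  proof (cases "\<exists>r\<in>A. 1 < r")
    case True
    then obtain r where r: "r \<in> A" "1 < r" by blast
    show False
      by (rule optimal_replace[OF opt r(1) _ support_point_1]) (use r(2) in auto)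
  next
    case False
    hence "a \<le> 2/3" if "a \<in> A" for a using none that by force
    hence "25/1296 \<le> distortion A" using distortion_ge_if_below_tail[OF \<open>A \<noteq> {}\<close>] by blast
    thus False using optimal_distortion_le_two_points[OF assms] by simp
  qed
qed

lemma optimal_point_strictly_nearest:
  assumes opt: "optimal_n_means n A" and a: "a \<in> A" and c: "c \<noteq> a" "support_point c"
    and beats: "\<And>x. x \<in> blocks - S \<Longrightarrow> \<bar>x - c\<bar> \<le> \<bar>x - a\<bar>"
  obtains x where "x \<in> S" "\<And>b. b \<in> A \<Longrightarrow> b \<noteq> a \<Longrightarrow> \<bar>x - a\<bar> < \<bar>x - b\<bar>"
proof -
  have "\<exists>x\<in>S. \<forall>b\<in>A - {a}. \<bar>x - a\<bar> < \<bar>x - b\<bar>"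
  proof (rule ccontr)
    assume "\<not> (\<exists>x\<in>S. \<forall>b\<in>A - {a}. \<bar>x - a\<bar> < \<bar>x - b\<bar>)"
    hence "\<exists>b\<in>insert c (A - {a}). \<bar>x - b\<bar> \<le> \<bar>x - a\<bar>" if "x \<in> blocks" for x
      using beats[of x] that by (cases "x \<in> S") (auto simp: not_less)
    thus False by (rule optimal_replace[OF opt a c])
  qed
  thus ?thesis using that by blast
qed

lemma optimal_avoids_gap:
  assumes opt: "optimal_n_means n A" and "2 \<le> n"
  shows "A \<inter> {1/3<..<2/3} = {}"
proof (rule ccontr)
  assume "A \<inter> {1/3<..<2/3} \<noteq> {}"
  then obtain a where a: "a \<in> A" "1/3 < a" "a < 2/3" by auto
  have fin: "finite A" using opt by (simp add: optimal_n_means_def admissible_def)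
  have "support_point (2/3)" by (rule support_point_J[of _ 2]) (unfold J_2, simp)
  obtain x1 where x1: "x1 \<in> {0..1/3}" "\<And>b. b \<in> A \<Longrightarrow> b \<noteq> a \<Longrightarrow> \<bar>x1 - a\<bar> < \<bar>x1 - b\<bar>"
    by (rule optimal_point_strictly_nearest[OF opt a(1) _ \<open>support_point (2/3)\<close>, where S="{0..1/3}"])
       (use a in auto)
  have "support_point (1/3)" by (rule support_point_J[of _ 1]) (unfold J_1, simp)
  obtain x2 where x2: "x2 \<in> {2/3..1}" "\<And>b. b \<in> A \<Longrightarrow> b \<noteq> a \<Longrightarrow> \<bar>x2 - a\<bar> < \<bar>x2 - b\<bar>"
    by (rule optimal_point_strictly_nearest[OF opt a(1) _ \<open>support_point (1/3)\<close>, where S="{2/3..1}"])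
       (use a in auto)
  obtain c0 where c0: "c0 \<in> A" "0 \<le> c0" "c0 \<le> 1/3"
    using optimal_meets_J1[OF assms] unfolding J_1 by auto
  then obtain p where p: "p \<in> A" "c0 \<le> p" "p < a" "A \<inter> {p<..<a} = {}"
    using finite_left_neighbour[OF fin, of c0 a] a by auto
  obtain e0 where e0: "e0 \<in> A" "2/3 \<le> e0" "e0 \<le> 1"
    using optimal_meets_right[OF assms] by auto
  then obtain q where q: "q \<in> A" "q \<le> e0" "a < q" "A \<inter> {a<..<q} = {}"
    using finite_right_neighbour[OF fin, of e0 a] a by auto
  have "(p + a)/2 < x1" "x1 \<le> 1/3"
    using x1(2)[OF p(1)] p(3) x1(1) a(2) by (auto simp: abs_if split: if_splits)
  have "x2 < (a + q)/2"
    using x2(2)[OF q(1)] q(3) x2(1) a(3) by (auto simp: abs_if split: if_splits)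
  show False
  proof (cases "3 * p < a")
    case True
    have "0 < voronoi_moment A p"
      by (rule voronoi_moment_J1_pos[OF fin p(1) a(1) p(3) _ True _ p(4)])
         (use c0 p \<open>(p + a)/2 < x1\<close> \<open>x1 \<le> 1/3\<close> in auto)
    thus False using optimal_voronoi_moment_eq_0[OF opt p(1)] by simp
  next
    case False
    have "voronoi_moment A q < 0"
      by (rule voronoi_moment_right_neg[OF fin q(1) a(1) q(3) _ _ _ q(4)])
         (use False e0 q x2 \<open>(p + a)/2 < x1\<close> \<open>x1 \<le> 1/3\<close> \<open>x2 < (a + q)/2\<close> in auto)
    thus False using optimal_voronoi_moment_eq_0[OF opt q(1)] by simp
  qed
qed

lemma optimal_voronoi_J1_avoids_right:
  assumes opt: "optimal_n_means n A" and "2 \<le> n" and a: "a \<in> A" "a \<in> J 1"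
  shows "voronoi a A \<inter> {2/3..1} = {}"
proof (rule ccontr)
  assume "voronoi a A \<inter> {2/3..1} \<noteq> {}"
  then obtain x where x: "x \<in> voronoi a A" "2/3 \<le> x" "x \<le> 1" by auto
  have fin: "finite A" using opt by (simp add: optimal_n_means_def admissible_def)
  have nearest: "\<bar>x - a\<bar> \<le> \<bar>x - b\<bar>" if "b \<in> A" for b
    using x(1) that mem_voronoi_iff[OF fin a(1)] by blast
  obtain e0 where e0: "e0 \<in> A" "2/3 \<le> e0" "e0 \<le> 1"
    using optimal_meets_right[OF assms(1,2)] by auto
  have "0 \<le> a" "a \<le> 1/3" using a(2) unfolding J_1 by auto
  hence "a = 1/3" "x = 2/3" using nearest[OF e0(1)] x e0 by auto
  hence "b \<notin> {1/3<..<1}" if "b \<in> A" for b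
    using nearest[OF that] by (auto simp: abs_if split: if_splits)
  hence gap: "A \<inter> {1/3<..<1} = {}" by blast
  hence "1 \<in> A" using e0 by (cases "e0 = 1") auto
  thus False using voronoi_moment_1_neg[OF fin _ gap] optimal_voronoi_moment_eq_0[OF opt] by fastforce
qed

lemma optimal_voronoi_right_avoids_J1:
  assumes opt: "optimal_n_means n A" and "2 \<le> n" and a: "a \<in> A" "a \<in> {2/3..1}"
  shows "voronoi a A \<inter> J 1 = {}"
proof (rule ccontr)
  assume "voronoi a A \<inter> J 1 \<noteq> {}"
  then obtain x where x: "x \<in> voronoi a A" "0 \<le> x" "x \<le> 1/3" unfolding J_1 by auto
  have fin: "finite A" using opt by (simp add: optimal_n_means_def admissible_def)
  have nearest: "\<bar>x - a\<bar> \<le> \<bar>x - b\<bar>" if "b \<in> A" for b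
    using x(1) that mem_voronoi_iff[OF fin a(1)] by blast
  obtain c0 where c0: "c0 \<in> A" "0 \<le> c0" "c0 \<le> 1/3"
    using optimal_meets_J1[OF assms(1,2)] unfolding J_1 by auto
  hence "a = 2/3" "x = 1/3" using nearest[OF c0(1)] x a(2) by auto
  hence "b \<notin> {0<..<2/3}" if "b \<in> A" for b
    using nearest[OF that] by (auto simp: abs_if split: if_splits)
  hence gap: "A \<inter> {0<..<2/3} = {}" by blast
  hence "0 \<in> A" using c0 by (cases "c0 = 0") auto
  thus False using voronoi_moment_0_pos[OF fin _ gap] optimal_voronoi_moment_eq_0[OF opt] by fastforce
qed

theorem proposition4p3:
  fixes n :: nat and \<alpha> :: "real set"
  assumes "n \<ge> 2" and "optimal_n_means n \<alpha>"
  shows "(\<alpha> \<inter> J 1 \<noteq> {} \<and> \<alpha> \<inter> {2/3..1} \<noteq> {}) \<and>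
         \<alpha> \<inter> {1/3<..<2/3} = {} \<and>
         (\<forall>a\<in>\<alpha> \<inter> J 1. voronoi a \<alpha> \<inter> {2/3..1} = {}) \<and>
         (\<forall>a\<in>\<alpha> \<inter> {2/3..1}. voronoi a \<alpha> \<inter> J 1 = {})"
  using optimal_meets_J1[OF assms(2,1)] optimal_meets_right[OF assms(2,1)]
    optimal_avoids_gap[OF assms(2,1)] optimal_voronoi_J1_avoids_right[OF assms(2,1)]
    optimal_voronoi_right_avoids_J1[OF assms(2,1)]
  by blast

end
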